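(* For all integers $c$, $n$, and $d$ with $n\ge 1$ and $d\ge 2$, there is a set $A$ of integers with $|A|=2n+2$ such that (i) $[c,c+n]\subseteq 2A$; (ii) $|x-y|\ge d$ for all $x,y\in 2A$ with $x\ne y$ and $x\notin[c,c+n]$; (iii) $\ell^{\sharp}_2(A)=n$.
   Context: For integers $a<b$, $[a,b]=\{j\in\mathbf{Z}: a\le j\le b\}$ is an interval of integers. $2A=\{a+a': a,a'\in A\}$. For a nonempty finite set $A\subseteq\mathbf{Z}$, $\ell^{\sharp}_2(A)$ is the largest integer $n\ge1$ such that $[c,c+n]\subseteq 2A$ for some $c\in\mathbf{Z}$ (undefined if $2A$ contains no interval). *)

theory Defs
  imports Main
begin

definition sumset2 :: "int set \<Rightarrow> int set" where
  "sumset2 A = {a + a' | a a'. a \<in> A \<and> a' \<in> A}"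

text \<open>Largest integer m \<ge> 1 such that some interval [c, c+m] lies in 2A
  (meaningful only when such an interval exists and 2A is finite).\<close>
definition ell_sharp2 :: "int set \<Rightarrow> int" where
  "ell_sharp2 A = (GREATEST m. m \<ge> 1 \<and> (\<exists>c. {c..c+m} \<subseteq> sumset2 A))"

end

theory Submission
  imports Defs
begin

(* Take A = {N 4^i : i \<le> n} \<union> {c + i - N 4^i : i \<le> n} with N large, so every element of 2A
   has the form r + N t with t = \<plusminus>4^i \<plusminus> 4^j and |r| small compared to N.  A nonzero sum of two
   signed powers of 4 determines both summands: its size fixes the larger exponent and its sign
   the sign of that term.  The summands in turn determine r, so elements of 2A with different t
   are at distance at least N - 4 max|r| \<ge> d, and t = 0 occurs only for the cancelling pairs
   N 4^i + (c + i - N 4^i), which fill [c, c + n].  Hence no point of 2A outside [c, c + n] has a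
   neighbour in 2A, and [c, c + n] is a longest interval. *)

(* The base must be at least 4: for b = 3 the bands collide, as 3^j + 3^j = 3^(j+1) - 3^j. *)
lemma signed_pow_sum_band:
  fixes b \<sigma> \<tau> :: int
  assumes b: "4 \<le> b" and \<sigma>: "\<sigma> \<in> {-1, 1}" and \<tau>: "\<tau> \<in> {-1, 1}" and "i \<le> j"
    and nz: "\<sigma> * b^i + \<tau> * b^j \<noteq> 0"
  shows "(b - 1) * b^j \<le> b * \<bar>\<sigma> * b^i + \<tau> * b^j\<bar>
    \<and> b * \<bar>\<sigma> * b^i + \<tau> * b^j\<bar> < (b - 1) * b^Suc j"
proof (cases "i = j")
  case True
  have "0 < b^j" using b by simp
  moreover have "\<bar>\<sigma> * b^i + \<tau> * b^j\<bar> = 2 * b^j" using True nz \<sigma> \<tau> calculation by auto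
  ultimately show ?thesis using b by (simp add: mult_strict_right_mono)
next
  case False
  then obtain p where j: "j = Suc p" and "i \<le> p" using \<open>i \<le> j\<close> by (cases j) auto
  define s where "s = \<sigma> * b^i + \<tau> * b^j"
  have "0 < b^i" "0 < b^j" using b by simp_all
  then have "\<bar>s\<bar> \<le> b^j + b^i" "b^j - b^i \<le> \<bar>s\<bar>"
    using \<sigma> \<tau> unfolding s_def by auto
  moreover have "b^i \<le> b^p" "b * b^p = b^j"
    using \<open>i \<le> p\<close> b j by (simp_all add: power_increasing)
  ultimately have "b^j - b^p \<le> \<bar>s\<bar>" "\<bar>s\<bar> \<le> b^j + b^p"
    by linarith+
  then have "b * (b^j - b^p) \<le> b * \<bar>s\<bar>" "b * \<bar>s\<bar> \<le> b * (b^j + b^p)"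
    using b by (auto intro!: mult_left_mono)
  moreover have "(b + 1) * b^j < ((b - 1) * b) * b^j"
  proof (rule mult_strict_right_mono)
    have "3 * b \<le> b * b" using b by (intro mult_right_mono) auto
    moreover have "(b - 1) * b = b * b - b" by (simp add: algebra_simps)
    ultimately show "b + 1 < (b - 1) * b" using b by linarith
  qed fact
  ultimately show ?thesis using \<open>b * b^p = b^j\<close> unfolding s_def[symmetric]
    by (simp add: algebra_simps)
qed

lemma pow_band_unique:
  fixes b x :: int
  assumes "1 < b"
    and "(b - 1) * b^j \<le> x" "x < (b - 1) * b^Suc j"
    and "(b - 1) * b^l \<le> x" "x < (b - 1) * b^Suc l"
  shows "j = l"
proof -
  have "\<not> j < l" if "x < (b - 1) * b^Suc j" "(b - 1) * b^l \<le> x" for j l :: nat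
  proof
    assume "j < l"
    then have "b^Suc j \<le> b^l" using \<open>1 < b\<close> by (intro power_increasing) auto
    then have "(b - 1) * b^Suc j \<le> (b - 1) * b^l" using \<open>1 < b\<close> by simp
    then show False using that by linarith
  qed
  then show ?thesis using assms by (meson linorder_neqE_nat)
qed

lemma signed_pow_eq_iff:
  fixes b \<sigma> \<sigma>' :: int
  assumes "1 < b" "\<sigma> \<in> {-1, 1}" "\<sigma>' \<in> {-1, 1}"
  shows "\<sigma> * b^i = \<sigma>' * b^k \<longleftrightarrow> \<sigma> = \<sigma>' \<and> i = k"
proof -
  have "0 < b^i" "0 < b^k" using assms(1) by simp_all
  then have "\<sigma> * b^i = \<sigma>' * b^k \<longleftrightarrow> \<sigma> = \<sigma>' \<and> b^i = b^k" using assms(2,3) by auto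
  then show ?thesis using power_inject_exp[OF assms(1)] by simp
qed

lemma sgn_signed_pow_sum:
  fixes b \<sigma> \<tau> :: int
  assumes "1 < b" "\<sigma> \<in> {-1, 1}" "\<tau> \<in> {-1, 1}" "i \<le> j" "\<sigma> * b^i + \<tau> * b^j \<noteq> 0"
  shows "sgn (\<sigma> * b^i + \<tau> * b^j) = \<tau>"
proof -
  have "0 < b^i" "b^i \<le> b^j" using assms(1,4) by (simp_all add: power_increasing)
  then show ?thesis using assms(2,3,5) by (auto simp: sgn_if)
qed

lemma signed_pow_sum_eq_ordered:
  fixes b \<sigma> \<tau> \<sigma>' \<tau>' :: int
  assumes b: "4 \<le> b" and signs: "\<sigma> \<in> {-1, 1}" "\<tau> \<in> {-1, 1}" "\<sigma>' \<in> {-1, 1}" "\<tau>' \<in> {-1, 1}"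
    and "i \<le> j" "k \<le> l"
    and eq: "\<sigma> * b^i + \<tau> * b^j = \<sigma>' * b^k + \<tau>' * b^l"
    and nz: "\<sigma> * b^i + \<tau> * b^j \<noteq> 0"
  shows "\<sigma> = \<sigma>' \<and> i = k \<and> \<tau> = \<tau>' \<and> j = l"
proof -
  have top: "j = l"
    using pow_band_unique[of b] b signed_pow_sum_band[OF b signs(1,2) \<open>i \<le> j\<close> nz]
      signed_pow_sum_band[OF b signs(3,4) \<open>k \<le> l\<close>] eq nz by auto
  have "\<tau> = \<tau>'"
    using sgn_signed_pow_sum[of b \<sigma> \<tau> i j] sgn_signed_pow_sum[of b \<sigma>' \<tau>' k l] assms by simp
  with top eq have "\<sigma> * b^i = \<sigma>' * b^k" by simp
  then show ?thesis using signed_pow_eq_iff[of b \<sigma> \<sigma>' i k] b signs top \<open>\<tau> = \<tau>'\<close> by simp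
qed

lemma signed_pow_sum_eq:
  fixes b \<sigma> \<tau> \<sigma>' \<tau>' :: int
  assumes "4 \<le> b" "\<sigma> \<in> {-1, 1}" "\<tau> \<in> {-1, 1}" "\<sigma>' \<in> {-1, 1}" "\<tau>' \<in> {-1, 1}"
    and "\<sigma> * b^i + \<tau> * b^j = \<sigma>' * b^k + \<tau>' * b^l"
    and "\<sigma> * b^i + \<tau> * b^j \<noteq> 0"
  shows "(\<sigma>, i) = (\<sigma>', k) \<and> (\<tau>, j) = (\<tau>', l) \<or> (\<sigma>, i) = (\<tau>', l) \<and> (\<tau>, j) = (\<sigma>', k)"
proof -
  note ordered = signed_pow_sum_eq_ordered[OF assms(1)]
  show ?thesis
  proof (cases "i \<le> j"; cases "k \<le> l")
    assume "i \<le> j" "k \<le> l"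
    then show ?thesis using ordered[of \<sigma> \<tau> \<sigma>' \<tau>' i j k l] assms by simp
  next
    assume "i \<le> j" "\<not> k \<le> l"
    then show ?thesis using ordered[of \<sigma> \<tau> \<tau>' \<sigma>' i j l k] assms by (simp add: add.commute)
  next
    assume "\<not> i \<le> j" "k \<le> l"
    then show ?thesis using ordered[of \<tau> \<sigma> \<sigma>' \<tau>' j i k l] assms by (simp add: add.commute)
  next
    assume "\<not> i \<le> j" "\<not> k \<le> l"
    then show ?thesis using ordered[of \<tau> \<sigma> \<tau>' \<sigma>' j i l k] assms by (simp add: add.commute)
  qed
qed

lemma abs_mult_add_ge:
  fixes N t r :: int
  assumes "t \<noteq> 0" "0 \<le> N"
  shows "N - \<bar>r\<bar> \<le> \<bar>N * t + r\<bar>"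
proof -
  have "N * 1 \<le> N * \<bar>t\<bar>"
    using assms by (intro mult_left_mono) auto
  then show ?thesis using assms(2) by (simp add: abs_mult)
qed

definition perturbed_powers :: "int \<Rightarrow> int \<Rightarrow> (int \<Rightarrow> nat \<Rightarrow> int) \<Rightarrow> nat set \<Rightarrow> int set" where
  "perturbed_powers b N f I = (\<lambda>(\<sigma>, i). f \<sigma> i + N * (\<sigma> * b^i)) ` ({-1, 1} \<times> I)"

lemma mem_perturbed_powers_iff:
  "a \<in> perturbed_powers b N f I \<longleftrightarrow> (\<exists>\<sigma> i. \<sigma> \<in> {-1, 1} \<and> i \<in> I \<and> a = f \<sigma> i + N * (\<sigma> * b^i))"
  unfolding perturbed_powers_def by auto

lemma card_perturbed_powers:
  fixes b N R :: int
  assumes "1 < b" "finite I" "2 * R < N"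
    and bound: "\<And>\<sigma> i. \<sigma> \<in> {-1, 1} \<Longrightarrow> i \<in> I \<Longrightarrow> \<bar>f \<sigma> i\<bar> \<le> R"
  shows "card (perturbed_powers b N f I) = 2 * card I"
proof -
  have "inj_on (\<lambda>(\<sigma>, i). f \<sigma> i + N * (\<sigma> * b^i)) ({-1, 1} \<times> I)"
  proof (rule inj_onI, clarify)
    fix \<sigma> i \<sigma>' k
    assume mem: "\<sigma> \<in> {-1, 1}" "i \<in> I" "\<sigma>' \<in> {-1, 1}" "k \<in> I"
      and eq: "f \<sigma> i + N * (\<sigma> * b^i) = f \<sigma>' k + N * (\<sigma>' * b^k)"
    have "\<sigma> * b^i - \<sigma>' * b^k = 0"
    proof (rule ccontr)
      assume "\<sigma> * b^i - \<sigma>' * b^k \<noteq> 0"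
      then have "N - \<bar>f \<sigma> i - f \<sigma>' k\<bar> \<le> \<bar>N * (\<sigma> * b^i - \<sigma>' * b^k) + (f \<sigma> i - f \<sigma>' k)\<bar>"
        using assms(3) bound[OF mem(1,2)] by (intro abs_mult_add_ge) auto
      also have "\<dots> = 0" using eq by (simp add: algebra_simps)
      finally show False using assms(3) bound[OF mem(1,2)] bound[OF mem(3,4)] by linarith
    qed
    then show "\<sigma> = \<sigma>' \<and> i = k" using signed_pow_eq_iff[OF assms(1) mem(1,3)] by simp
  qed
  then show ?thesis
    unfolding perturbed_powers_def using assms(2) by (simp add: card_image card_cartesian_product)
qed

lemma sumset2_perturbed_powersE:
  assumes "x \<in> sumset2 (perturbed_powers b N f I)"
  obtains \<sigma> i \<tau> j where "\<sigma> \<in> {-1, 1}" "i \<in> I" "\<tau> \<in> {-1, 1}" "j \<in> I"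
    "x = f \<sigma> i + f \<tau> j + N * (\<sigma> * b^i + \<tau> * b^j)"
proof -
  obtain a a' where "a \<in> perturbed_powers b N f I" "a' \<in> perturbed_powers b N f I" "x = a + a'"
    using assms unfolding sumset2_def by blast
  then obtain \<sigma> i \<tau> j where "\<sigma> \<in> {-1, 1}" "i \<in> I" "\<tau> \<in> {-1, 1}" "j \<in> I"
    "x = (f \<sigma> i + N * (\<sigma> * b^i)) + (f \<tau> j + N * (\<tau> * b^j))"
    unfolding mem_perturbed_powers_iff by metis
  then show thesis using that by (simp add: algebra_simps)
qed

lemma cancelling_pair_in_sumset2:
  assumes "i \<in> I"
  shows "f 1 i + f (-1) i \<in> sumset2 (perturbed_powers b N f I)"
proof -
  have "f 1 i + N * (1 * b^i) \<in> perturbed_powers b N f I"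
    "f (-1) i + N * (-1 * b^i) \<in> perturbed_powers b N f I"
    using assms unfolding perturbed_powers_def by force+
  moreover have "f 1 i + f (-1) i = (f 1 i + N * (1 * b^i)) + (f (-1) i + N * (-1 * b^i))"
    by simp
  ultimately show ?thesis unfolding sumset2_def by blast
qed

lemma sumset2_perturbed_powers_separated:
  fixes b N R d :: int
  assumes b: "4 \<le> b" and N: "4 * R + d \<le> N" "0 \<le> N"
    and bound: "\<And>\<sigma> i. \<sigma> \<in> {-1, 1} \<Longrightarrow> i \<in> I \<Longrightarrow> \<bar>f \<sigma> i\<bar> \<le> R"
  shows "\<forall>x\<in>sumset2 (perturbed_powers b N f I). \<forall>y\<in>sumset2 (perturbed_powers b N f I).
    x \<noteq> y \<and> x \<notin> (\<lambda>i. f 1 i + f (-1) i) ` I \<longrightarrow> d \<le> \<bar>x - y\<bar>"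
proof (intro ballI impI, elim conjE)
  fix x y
  assume x: "x \<in> sumset2 (perturbed_powers b N f I)" and y: "y \<in> sumset2 (perturbed_powers b N f I)"
    and "x \<noteq> y" and x_not_cancelling: "x \<notin> (\<lambda>i. f 1 i + f (-1) i) ` I"
  obtain \<sigma> i \<tau> j where x_signs: "\<sigma> \<in> {-1, 1}" "\<tau> \<in> {-1, 1}" and x_idx: "i \<in> I" "j \<in> I"
    and x_eq: "x = f \<sigma> i + f \<tau> j + N * (\<sigma> * b^i + \<tau> * b^j)"
    using x by (rule sumset2_perturbed_powersE)
  obtain \<sigma>' k \<tau>' l where y_signs: "\<sigma>' \<in> {-1, 1}" "\<tau>' \<in> {-1, 1}" and y_idx: "k \<in> I" "l \<in> I"
    and y_eq: "y = f \<sigma>' k + f \<tau>' l + N * (\<sigma>' * b^k + \<tau>' * b^l)"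
    using y by (rule sumset2_perturbed_powersE)
  define t where "t = \<sigma> * b^i + \<tau> * b^j"
  define t' where "t' = \<sigma>' * b^k + \<tau>' * b^l"
  have "t \<noteq> 0"
  proof
    assume "t = 0"
    then have "\<sigma> * b^i = (-\<tau>) * b^j" unfolding t_def by simp
    then have "\<sigma> = -\<tau> \<and> i = j" using signed_pow_eq_iff[of b \<sigma> "-\<tau>" i j] b x_signs by auto
    then have "x = f 1 i + f (-1) i" using x_eq x_signs \<open>t = 0\<close> unfolding t_def by auto
    then show False using x_not_cancelling x_idx by blast
  qed
  have "t \<noteq> t'"
  proof
    assume "t = t'"
    then have "(\<sigma>, i) = (\<sigma>', k) \<and> (\<tau>, j) = (\<tau>', l) \<or> (\<sigma>, i) = (\<tau>', l) \<and> (\<tau>, j) = (\<sigma>', k)"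
      using signed_pow_sum_eq[OF b x_signs y_signs] \<open>t \<noteq> 0\<close> unfolding t_def t'_def by blast
    then have "x = y" using x_eq y_eq \<open>t = t'\<close> unfolding t_def t'_def by auto
    then show False using \<open>x \<noteq> y\<close> by blast
  qed
  define r where "r = (f \<sigma> i + f \<tau> j) - (f \<sigma>' k + f \<tau>' l)"
  have "\<bar>r\<bar> \<le> 4 * R"
    using bound[OF x_signs(1) x_idx(1)] bound[OF x_signs(2) x_idx(2)]
      bound[OF y_signs(1) y_idx(1)] bound[OF y_signs(2) y_idx(2)] unfolding r_def by linarith
  moreover have "N - \<bar>r\<bar> \<le> \<bar>N * (t - t') + r\<bar>"
    using \<open>t \<noteq> t'\<close> N(2) by (intro abs_mult_add_ge) auto
  moreover have "x - y = N * (t - t') + r"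
    unfolding x_eq y_eq r_def t_def t'_def by (simp add: algebra_simps)
  ultimately show "d \<le> \<bar>x - y\<bar>" using N(1) by linarith
qed

lemma longest_interval_eq:
  fixes S :: "int set" and c n d :: int
  assumes "1 \<le> n" "2 \<le> d" "{c..c+n} \<subseteq> S"
    and separated: "\<forall>x\<in>S. \<forall>y\<in>S. x \<noteq> y \<and> x \<notin> {c..c+n} \<longrightarrow> d \<le> \<bar>x - y\<bar>"
  shows "(GREATEST m. 1 \<le> m \<and> (\<exists>c'. {c'..c'+m} \<subseteq> S)) = n"
proof (rule Greatest_equality)
  show "1 \<le> n \<and> (\<exists>c'. {c'..c'+n} \<subseteq> S)" using assms(1,3) by blast
next
  fix m assume "1 \<le> m \<and> (\<exists>c'. {c'..c'+m} \<subseteq> S)"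
  then obtain c' where "1 \<le> m" and sub: "{c'..c'+m} \<subseteq> S" by blast
  have "z \<in> {c..c+n}" if z: "z \<in> {c'..c'+m}" for z
  proof -
    define w where "w = (if z = c' then z + 1 else z - 1)"
    have w: "w \<in> {c'..c'+m}" "\<bar>z - w\<bar> = 1" using z \<open>1 \<le> m\<close> unfolding w_def by auto
    show ?thesis
    proof (rule ccontr)
      assume "z \<notin> {c..c+n}"
      moreover have "z \<in> S" "w \<in> S" "z \<noteq> w" using sub z w by auto
      ultimately have "d \<le> \<bar>z - w\<bar>" using separated by blast
      then show False using w(2) \<open>2 \<le> d\<close> by simp
    qed
  qed
  from this[of c'] this[of "c' + m"] show "m \<le> n" using \<open>1 \<le> m\<close> by auto
qed

lemma image_int_shift_atMost:
  fixes c n :: int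
  assumes "0 \<le> n"
  shows "(\<lambda>i. c + int i) ` {..nat n} = {c..c+n}"
proof (intro equalityI subsetI)
  fix z assume "z \<in> {c..c+n}"
  then have "nat (z - c) \<in> {..nat n}" "z = c + int (nat (z - c))" by auto
  then show "z \<in> (\<lambda>i. c + int i) ` {..nat n}" by blast
qed (use assms in auto)

theorem mainTheorem4:
  fixes c n d :: int
  assumes "n \<ge> 1" and "d \<ge> 2"
  shows "\<exists>A :: int set. finite A \<and> card A = nat (2*n + 2)
           \<and> {c..c+n} \<subseteq> sumset2 A
           \<and> (\<forall>x\<in>sumset2 A. \<forall>y\<in>sumset2 A. x \<noteq> y \<and> x \<notin> {c..c+n} \<longrightarrow> \<bar>x - y\<bar> \<ge> d)
           \<and> ell_sharp2 A = n"
proof -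
  define I where "I = {..nat n}"
  define f where "f \<sigma> i = (if \<sigma> = 1 then 0 else c + int i)" for \<sigma> :: int and i
  define R where "R = \<bar>c\<bar> + n"
  define A where "A = perturbed_powers 4 (4 * R + d) f I"
  have bound: "\<bar>f \<sigma> i\<bar> \<le> R" if "i \<in> I" for \<sigma> i
    using that assms(1) unfolding f_def R_def I_def by auto
  have cancelling: "(\<lambda>i. f 1 i + f (-1) i) ` I = {c..c+n}"
    using image_int_shift_atMost[of n c] assms(1) by (simp add: f_def I_def)
  have "finite A" unfolding A_def perturbed_powers_def I_def by simp
  moreover have "card A = nat (2*n + 2)"
    unfolding A_def using card_perturbed_powers[of 4 I R "4 * R + d" f] bound assms
    by (simp add: I_def R_def nat_mult_distrib)
  moreover have interval: "{c..c+n} \<subseteq> sumset2 A"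
    unfolding A_def cancelling[symmetric] by (auto intro: cancelling_pair_in_sumset2)
  moreover have separated: "\<forall>x\<in>sumset2 A. \<forall>y\<in>sumset2 A. x \<noteq> y \<and> x \<notin> {c..c+n} \<longrightarrow> \<bar>x - y\<bar> \<ge> d"
    using sumset2_perturbed_powers_separated[of 4 R d "4 * R + d" I f, OF _ _ _ bound] assms
    unfolding A_def cancelling by (simp add: R_def)
  moreover have "ell_sharp2 A = n"
    unfolding ell_sharp2_def using longest_interval_eq[OF assms interval separated] .
  ultimately show ?thesis by blast
qed

end
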